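(* Let $A_0,A_1,A_2\in\mathbb{R}[x]$ with $A_2\not\equiv0$, let $I$ be an open interval on which $A_2$ has no zeros, and let $g_0,g_1\in\mathbb{R}[x,y]$ with $g_1\not\equiv0$ and $\partial_y(g_0/g_1)\not\equiv0$. Consider the polynomial vector field $\mathcal{X}=P\,\partial_x+Q\,\partial_y$ with $$P=A_2(x)\left(g_0\,\partial_y g_1-g_1\,\partial_y g_0\right),\qquad Q=A_0(x)g_1^2+A_1(x)g_1g_0+A_2(x)g_0^2+A_2(x)\left(g_1\,\partial_x g_0-g_0\,\partial_x g_1\right).$$ Let $w\in C^2(I)$ be any nonzero solution of $A_2w''+A_1w'+A_0w=0$ on $I$, and put $f(x,y)=g_1(x,y)\,w'(x)-g_0(x,y)\,w(x)$ on $I\times\mathbb{R}$. Then $f$ is an invariant of $\mathcal{X}$ with the polynomial cofactor $$k=\left(A_0\,\partial_y g_1+A_1\,\partial_y g_0\right)g_1+A_2\,g_0\,\partial_y g_0+A_2\left(\partial_y g_1\,\partial_x g_0-\partial_y g_0\,\partial_x g_1\right),$$ i.e. $P\,\partial_x f+Q\,\partial_y f=k\,f$ on $I\times\mathbb{R}$.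
   Context: A $C^1$ function $f$ on an open set $U\subset\mathbb{R}^2$ is called an invariant of a vector field $\mathcal{X}=P\partial_x+Q\partial_y$ with cofactor $k$ if $P\,\partial_x f+Q\,\partial_y f=k f$ on $U$. *)

theory Defs
  imports "HOL-Analysis.Analysis" "HOL-Computational_Algebra.Polynomial"
begin

text \<open>Bivariate real polynomials R[x,y] are represented as polynomials in y whose
coefficients are polynomials in x, i.e. the type real poly poly.\<close>

type_synonym bipoly = "real poly poly"

definition ev2 :: "bipoly \<Rightarrow> real \<times> real \<Rightarrow> real" where
  "ev2 p z = poly (map_poly (\<lambda>c. poly c (fst z)) p) (snd z)"

definition dx :: "bipoly \<Rightarrow> bipoly" where
  "dx p = map_poly pderiv p"

definition dy :: "bipoly \<Rightarrow> bipoly" where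
  "dy p = pderiv p"

definition cx :: "real poly \<Rightarrow> bipoly" where
  "cx a = [:a:]"

definition is_invariant ::
  "(real \<times> real \<Rightarrow> real) \<Rightarrow> (real \<times> real \<Rightarrow> real) \<Rightarrow> (real \<times> real \<Rightarrow> real)
   \<Rightarrow> (real \<times> real \<Rightarrow> real) \<Rightarrow> (real \<times> real) set \<Rightarrow> bool" where
  "is_invariant P Q f k U \<longleftrightarrow> open U \<and>
     (\<exists>fx fy. continuous_on U fx \<and> continuous_on U fy \<and>
       (\<forall>z\<in>U. (f has_derivative (\<lambda>h. fst h * fx z + snd h * fy z)) (at z)) \<and>
       (\<forall>z\<in>U. P z * fx z + Q z * fy z = k z * f z))"

end

theory Submission
  imports Defs
begin

text \<open>Differentiating \<open>f = g1 w' - g0 w\<close> gives \<open>f_x = g1_x w' + g1 w'' - g0_x w - g0 w'\<close>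
and \<open>f_y = g1_y w' - g0_y w\<close>. Substituting, the defect \<open>P f_x + Q f_y - k f\<close> collapses to
\<open>g1 (g0 g1_y - g1 g0_y) (A2 w'' + A1 w' + A0 w)\<close>, which vanishes on \<open>I \<times> \<real>\<close> by the
differential equation.\<close>

lemma ev2_pCons: "ev2 (pCons a p) z = poly a (fst z) + snd z * ev2 p z"
  by (simp add: ev2_def map_poly_pCons)

text \<open>This makes \<open>ev2\<close> a composition of two evaluation homomorphisms, so its algebraic
laws follow from those of \<open>poly\<close>.\<close>

lemma ev2_eq_poly_poly: "ev2 p z = poly (poly p [:snd z:]) (fst z)"
proof (induction p)
  case 0
  show ?case by (simp add: ev2_def)
next
  case (pCons a p)
  then show ?case by (simp add: ev2_pCons)
qed

lemma ev2_add: "ev2 (p + q) z = ev2 p z + ev2 q z"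
  and ev2_diff: "ev2 (p - q) z = ev2 p z - ev2 q z"
  and ev2_mult: "ev2 (p * q) z = ev2 p z * ev2 q z"
  and ev2_power: "ev2 (p ^ n) z = ev2 p z ^ n"
  and ev2_cx: "ev2 (cx a) z = poly a (fst z)"
  by (simp_all add: ev2_eq_poly_poly cx_def)

lemma has_derivative_fst_comp:
  fixes h :: "real \<Rightarrow> real" and z :: "real \<times> 'b::real_normed_vector"
  assumes "(h has_real_derivative h') (at (fst z))"
  shows "((\<lambda>z. h (fst z)) has_derivative (\<lambda>v. fst v * h')) (at z)"
proof -
  have "(h has_derivative (\<lambda>t. t * h')) (at (fst z))"
    using assms by (simp add: has_field_derivative_def mult.commute[of _ h'])
  from has_derivative_compose[OF has_derivative_fst[OF has_derivative_ident] this]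
  show ?thesis by simp
qed

lemma continuous_on_fst_comp:
  assumes "continuous_on I h"
  shows "continuous_on (I \<times> B) (\<lambda>z. h (fst z))"
  by (rule continuous_on_compose2[OF assms continuous_on_fst[OF continuous_on_id]]) auto

lemma dx_pCons: "dx (pCons a p) = pCons (pderiv a) (dx p)"
  by (simp add: dx_def map_poly_pCons)

lemma dy_pCons: "dy (pCons a p) = p + pCons 0 (dy p)"
  by (simp add: dy_def pderiv_pCons)

lemma has_derivative_ev2:
  "(ev2 p has_derivative (\<lambda>v. fst v * ev2 (dx p) z + snd v * ev2 (dy p) z)) (at z)"
proof (induction p)
  case 0
  show ?case by (simp add: dx_def dy_def ev2_def)
next
  case (pCons a p)
  have ev2_pCons_fun: "ev2 (pCons a p) = (\<lambda>z. poly a (fst z) + snd z * ev2 p z)"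
    by (simp add: ev2_pCons fun_eq_iff)
  have "((\<lambda>z. poly a (fst z) + snd z * ev2 p z) has_derivative
      (\<lambda>v. fst v * poly (pderiv a) (fst z)
         + (snd z * (fst v * ev2 (dx p) z + snd v * ev2 (dy p) z) + snd v * ev2 p z))) (at z)"
    by (intro has_derivative_add has_derivative_fst_comp poly_DERIV has_derivative_mult
        has_derivative_snd has_derivative_ident pCons.IH)
  then show ?case
    unfolding ev2_pCons_fun dx_pCons dy_pCons
    by (rule has_derivative_eq_rhs) (auto simp: ev2_pCons ev2_add algebra_simps)
qed

lemma continuous_on_ev2: "continuous_on S (ev2 p)"
  using has_derivative_ev2 has_derivative_continuous continuous_at_imp_continuous_on by blast

lemma has_derivative_ev2_times_fst:
  assumes "(u has_real_derivative u') (at (fst z))"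
  shows "((\<lambda>z. ev2 p z * u (fst z)) has_derivative
    (\<lambda>v. fst v * (ev2 (dx p) z * u (fst z) + ev2 p z * u') + snd v * (ev2 (dy p) z * u (fst z))))
    (at z)"
  by (rule has_derivative_eq_rhs,
      rule has_derivative_mult[OF has_derivative_ev2 has_derivative_fst_comp[OF assms]])
     (simp add: algebra_simps)

lemma invariant_identity:
  fixes A0 A1 A2 :: "real poly" and g0 g1 :: bipoly and w w1 w2 :: "real \<Rightarrow> real"
  assumes "poly A2 (fst z) * w2 (fst z) + poly A1 (fst z) * w1 (fst z) + poly A0 (fst z) * w (fst z) = 0"
  shows "ev2 (cx A2 * (g0 * dy g1 - g1 * dy g0)) z
      * ((ev2 (dx g1) z * w1 (fst z) + ev2 g1 z * w2 (fst z))
         - (ev2 (dx g0) z * w (fst z) + ev2 g0 z * w1 (fst z)))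
    + ev2 (cx A0 * g1\<^sup>2 + cx A1 * g1 * g0 + cx A2 * g0\<^sup>2 + cx A2 * (g1 * dx g0 - g0 * dx g1)) z
      * (ev2 (dy g1) z * w1 (fst z) - ev2 (dy g0) z * w (fst z))
    = ev2 ((cx A0 * dy g1 + cx A1 * dy g0) * g1 + cx A2 * g0 * dy g0
           + cx A2 * (dy g1 * dx g0 - dy g0 * dx g1)) z
      * (ev2 g1 z * w1 (fst z) - ev2 g0 z * w (fst z))"
    (is "?lhs = ?rhs")
proof -
  have "?lhs - ?rhs = ev2 (g1 * (g0 * dy g1 - g1 * dy g0)) z
      * (poly A2 (fst z) * w2 (fst z) + poly A1 (fst z) * w1 (fst z) + poly A0 (fst z) * w (fst z))"
    by (simp add: ev2_add ev2_diff ev2_mult ev2_power ev2_cx) algebra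
  with assms show ?thesis by simp
qed

theorem mainTheorem2:
  fixes A0 A1 A2 :: "real poly" and g0 g1 :: bipoly and I :: "real set"
    and w w1 w2 :: "real \<Rightarrow> real"
  assumes "A2 \<noteq> 0"
    and "open I" and "is_interval I" and "I \<noteq> {}"
    and "\<forall>x\<in>I. poly A2 x \<noteq> 0"
    and "g1 \<noteq> 0"
    and "dy g0 * g1 - g0 * dy g1 \<noteq> 0"
    and "\<forall>x\<in>I. (w has_real_derivative w1 x) (at x)"
    and "\<forall>x\<in>I. (w1 has_real_derivative w2 x) (at x)"
    and "continuous_on I w2"
    and "\<forall>x\<in>I. poly A2 x * w2 x + poly A1 x * w1 x + poly A0 x * w x = 0"
    and "\<exists>x\<in>I. w x \<noteq> 0"
  shows "is_invariant
     (ev2 (cx A2 * (g0 * dy g1 - g1 * dy g0)))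
     (ev2 (cx A0 * g1\<^sup>2 + cx A1 * g1 * g0 + cx A2 * g0\<^sup>2
           + cx A2 * (g1 * dx g0 - g0 * dx g1)))
     (\<lambda>z. ev2 g1 z * w1 (fst z) - ev2 g0 z * w (fst z))
     (ev2 ((cx A0 * dy g1 + cx A1 * dy g0) * g1 + cx A2 * g0 * dy g0
           + cx A2 * (dy g1 * dx g0 - dy g0 * dx g1)))
     (I \<times> UNIV)"
proof -
  define fx where "fx z = (ev2 (dx g1) z * w1 (fst z) + ev2 g1 z * w2 (fst z))
    - (ev2 (dx g0) z * w (fst z) + ev2 g0 z * w1 (fst z))" for z
  define fy where "fy z = ev2 (dy g1) z * w1 (fst z) - ev2 (dy g0) z * w (fst z)" for z
  have "continuous_on I w" "continuous_on I w1"
    using assms(8,9) by (meson DERIV_isCont continuous_at_imp_continuous_on)+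
  then have "continuous_on (I \<times> UNIV) fx" "continuous_on (I \<times> UNIV) fy"
    unfolding fx_def fy_def using assms(10)
    by (auto intro!: continuous_intros continuous_on_ev2 continuous_on_fst_comp)
  moreover have "((\<lambda>z. ev2 g1 z * w1 (fst z) - ev2 g0 z * w (fst z)) has_derivative
      (\<lambda>v. fst v * fx z + snd v * fy z)) (at z)" if "z \<in> I \<times> UNIV" for z
    unfolding fx_def fy_def
  proof (rule has_derivative_eq_rhs[OF has_derivative_diff
        [OF has_derivative_ev2_times_fst has_derivative_ev2_times_fst]])
    show "(w1 has_real_derivative w2 (fst z)) (at (fst z))"
      and "(w has_real_derivative w1 (fst z)) (at (fst z))"
      using that assms(8,9) by auto
  qed (auto simp: algebra_simps)
  ultimately show ?thesis
    using assms(2,11) unfolding is_invariant_def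
    by (intro conjI exI[of _ fx] exI[of _ fy])
       (auto simp: fx_def fy_def intro!: invariant_identity open_Times)
qed

end
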